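(* Let $M\in\mathbb{R}$ and let $f:B(0,e^M)\to\mathbb{R}^2$ be a quasiconformal map with $f(0)=0$. Suppose that for some $t_0<M$ the image under $f$ of the circle $\{|z|=e^{t_0}\}$ is a non-rectifiable curve. Then $\widetilde{\rho_f}$ is not bi-Lipschitz at $t_0$, i.e. it is not bi-Lipschitz on any neighbourhood of $t_0$.
   Context: Mean radius: for $0<r<e^M$, $\rho_f(r)=\left(\operatorname{area} f(B(0,r))/\pi\right)^{1/2}$, where area is two-dimensional Lebesgue measure. Its logarithmic transform is $\widetilde{\rho_f}:(-\infty,M)\to\mathbb{R}$, $\widetilde{\rho_f}(t)=\ln\rho_f(e^t)$. *)

theory Defs
  imports "HOL-Analysis.Analysis"
begin

text \<open>The plane R^2 is identified with the complex numbers.\<close>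

definition max_stretch :: "(complex \<Rightarrow> complex) \<Rightarrow> complex \<Rightarrow> real \<Rightarrow> real" where
  "max_stretch f x r = Sup ((\<lambda>y. norm (f y - f x)) ` sphere x r)"

definition min_stretch :: "(complex \<Rightarrow> complex) \<Rightarrow> complex \<Rightarrow> real \<Rightarrow> real" where
  "min_stretch f x r = Inf ((\<lambda>y. norm (f y - f x)) ` sphere x r)"

text \<open>Quasiconformal map on an open set S (metric definition): a homeomorphism of S onto
  its image whose linear dilatation limsup_{r->0} L_f(x,r)/l_f(x,r) is uniformly bounded on S.\<close>
definition quasiconformal_on :: "complex set \<Rightarrow> (complex \<Rightarrow> complex) \<Rightarrow> bool" where
  "quasiconformal_on S f \<longleftrightarrow>
     open S \<and> inj_on f S \<and> continuous_on S f \<and> continuous_on (f ` S) (inv_into S f) \<and>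
     (\<exists>H::real. \<forall>x\<in>S.
        Limsup (at_right 0) (\<lambda>r. ereal (max_stretch f x r / min_stretch f x r)) \<le> ereal H)"

definition rectifiable_curve :: "(real \<Rightarrow> complex) \<Rightarrow> bool" where
  "rectifiable_curve g \<longleftrightarrow>
     (\<exists>B::real. \<forall>(n::nat) (t::nat \<Rightarrow> real).
        (\<forall>i\<le>n. t i \<in> {0..1}) \<and> (\<forall>i<n. t i \<le> t (Suc i)) \<longrightarrow>
        (\<Sum>i<n. norm (g (t (Suc i)) - g (t i))) \<le> B)"

definition mean_radius :: "(complex \<Rightarrow> complex) \<Rightarrow> real \<Rightarrow> real" where
  "mean_radius f r = sqrt (measure lebesgue (f ` ball 0 r) / pi)"

definition log_mean_radius :: "(complex \<Rightarrow> complex) \<Rightarrow> real \<Rightarrow> real" where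
  "log_mean_radius f t = ln (mean_radius f (exp t))"

definition bi_lipschitz_on :: "real set \<Rightarrow> (real \<Rightarrow> real) \<Rightarrow> bool" where
  "bi_lipschitz_on U g \<longleftrightarrow>
     (\<exists>L>0. \<forall>s\<in>U. \<forall>t\<in>U. \<bar>s - t\<bar> \<le> L * \<bar>g s - g t\<bar> \<and> \<bar>g s - g t\<bar> \<le> L * \<bar>s - t\<bar>)"

definition bi_lipschitz_at :: "real \<Rightarrow> real \<Rightarrow> (real \<Rightarrow> real) \<Rightarrow> bool" where
  "bi_lipschitz_at M t0 g \<longleftrightarrow>
     (\<exists>U. open U \<and> t0 \<in> U \<and> U \<subseteq> {..<M} \<and> bi_lipschitz_on U g)"

end

(*
  Suppose the log mean radius is bi-Lipschitz near t0 and put R = exp t0. With A r the area of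
  f(B(0,r)), the upper Lipschitz bound gives A(R + d) - A(R - d) = O(d). Cut the circle |z| = R
  into N arcs of angular length 2 pi/N, put d = 2 pi R/N, pick a point x_m on the m-th arc and
  let l_m be the least distance from f(x_m) to the image of the circle of radius d around x_m.
  Quasiconformality makes f(B(x_m,d)) contain the disc of radius l_m around f(x_m), and makes the
  image of the m-th arc have diameter at most 2 H l_m. The balls B(x_m,d) fall into ten families of
  pairwise disjoint balls inside the annulus R - d < |z| < R + d, so pi * sum l_m^2 = O(d), and by
  Cauchy-Schwarz sum l_m = O(1) uniformly in N. Covers of the image curve of arbitrarily small mesh
  with bounded total oscillation force it to be rectifiable. As the distortion bound holds only
  below a radius depending on the point, this runs on the closed sets of parameters where it holds
  below rho_k, with rho_k -> 0; these exhaust the circle, and the length bound passes to the limit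
  by continuity of the measure.
*)

theory Submission
  imports Defs "HOL-Homology.Invariance_of_Domain"
begin

section \<open>Rectifiability from covers of small total oscillation\<close>

definition oscillation_cover :: "(real \<Rightarrow> complex) \<Rightarrow> real set \<Rightarrow> real \<Rightarrow> real \<Rightarrow> bool" where
  "oscillation_cover g S \<beta> B \<longleftrightarrow>
     (\<exists>(N::nat) c w \<beta>'. \<beta>' \<le> \<beta> \<and> (\<forall>m<N. 0 \<le> w m) \<and> (\<Sum>m<N. w m) \<le> B \<and>
        S \<subseteq> (\<Union>m<N. {c m..c m + \<beta>'}) \<and>
        (\<forall>m<N. \<forall>y\<in>{c m..c m + \<beta>'} \<inter> S. \<forall>z\<in>{c m..c m + \<beta>'} \<inter> S. norm (g y - g z) \<le> w m))"

lemma card_le_2_if_no_three_increasing: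
  fixes I :: "'a::linorder set"
  assumes "finite I" and no3: "\<And>i j l. i \<in> I \<Longrightarrow> j \<in> I \<Longrightarrow> l \<in> I \<Longrightarrow> i < j \<Longrightarrow> j < l \<Longrightarrow> False"
  shows "card I \<le> 2"
proof (cases "I = {}")
  case False
  have "I \<subseteq> {Min I, Max I}"
  proof
    fix j assume j: "j \<in> I"
    have "Min I \<le> j" "j \<le> Max I" "Min I \<in> I" "Max I \<in> I"
      using \<open>finite I\<close> False j by auto
    with no3[of "Min I" j "Max I"] j show "j \<in> {Min I, Max I}"
      by (cases "Min I < j"; cases "j < Max I") auto
  qed
  then have "card I \<le> card {Min I, Max I}" by (rule card_mono[rotated]) simp
  also have "\<dots> \<le> 2" by (simp add: card_insert_if)
  finally show ?thesis .
qed simp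

lemma measure_le_of_dist_le:
  fixes S :: "real set"
  assumes "S \<in> sets lborel" "\<And>y z. y \<in> S \<Longrightarrow> z \<in> S \<Longrightarrow> \<bar>y - z\<bar> \<le> w" "w \<ge> 0"
  shows "measure lborel S \<le> 2 * w"
proof (cases "S = {}")
  case False
  then obtain y0 where "y0 \<in> S" by auto
  then have "S \<subseteq> {y0 - w..y0 + w}"
    using assms(2) by (force simp: abs_le_iff)
  then have "measure lborel S \<le> measure lborel {y0 - w..y0 + w}"
    using assms(1) by (intro measure_mono_fmeasurable) (auto intro: fmeasurable_compact)
  then show ?thesis using \<open>w \<ge> 0\<close> by simp
qed (use assms in simp)

lemma measure_image_norm_diff_le:
  fixes g :: "real \<Rightarrow> 'a::real_normed_vector"
  assumes "compact Z" "continuous_on Z g" "\<And>y z. y \<in> Z \<Longrightarrow> z \<in> Z \<Longrightarrow> norm (g y - g z) \<le> w" "w \<ge> 0"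
  shows "measure lborel ((\<lambda>s. norm (g s - a)) ` Z) \<le> 2 * w"
proof (rule measure_le_of_dist_le)
  have "continuous_on Z (\<lambda>s. norm (g s - a))"
    using assms(2) by (intro continuous_intros)
  then show "(\<lambda>s. norm (g s - a)) ` Z \<in> sets lborel"
    using assms(1) by (simp add: borel_compact compact_continuous_image)
  show "\<bar>u - v\<bar> \<le> w" if u: "u \<in> (\<lambda>s. norm (g s - a)) ` Z" and v: "v \<in> (\<lambda>s. norm (g s - a)) ` Z" for u v
  proof -
    obtain y z where "y \<in> Z" "z \<in> Z" "u = norm (g y - a)" "v = norm (g z - a)"
      using u v by blast
    then show ?thesis
      using assms(3)[of y z] norm_triangle_ineq3[of "g y - a" "g z - a"] by simp
  qed
qed fact

lemma measure_image_subsingleton: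
  fixes h :: "'a \<Rightarrow> real"
  assumes "\<And>y z. y \<in> Z \<Longrightarrow> z \<in> Z \<Longrightarrow> y = z"
  shows "measure lborel (h ` Z) = 0"
proof -
  have "Z = {} \<or> (\<exists>y. Z = {y})" using assms by blast
  then show ?thesis by auto
qed

lemma norm_diff_le_measure_image:
  fixes g :: "real \<Rightarrow> 'a::real_normed_vector"
  assumes "a \<le> b" "continuous_on {a..b} g"
  shows "norm (g b - g a) \<le> measure lborel ((\<lambda>s. norm (g s - g a)) ` {a..b})"
proof -
  let ?h = "\<lambda>s. norm (g s - g a)"
  have "continuous_on {a..b} ?h"
    using assms(2) by (intro continuous_intros)
  then have "compact (?h ` {a..b})" "connected (?h ` {a..b})"
    by (auto intro: compact_continuous_image connected_continuous_image)
  moreover have "0 \<in> ?h ` {a..b}" "norm (g b - g a) \<in> ?h ` {a..b}"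
    using assms(1) by force+
  ultimately have "{0..norm (g b - g a)} \<subseteq> ?h ` {a..b}"
    using connected_contains_Icc by blast
  with \<open>compact (?h ` {a..b})\<close> have "measure lborel {0..norm (g b - g a)} \<le> measure lborel (?h ` {a..b})"
    by (intro measure_mono_fmeasurable) (auto intro: fmeasurable_compact)
  then show ?thesis by simp
qed

lemma measure_image_Int_incseq_tendsto:
  fixes h :: "'a::topological_space \<Rightarrow> real"
  assumes "compact K" "continuous_on K h" "\<And>k. closed (E k)" "incseq E" "K \<subseteq> (\<Union>k. E k)"
  shows "(\<lambda>k. measure lborel (h ` (K \<inter> E k))) \<longlonglongrightarrow> measure lborel (h ` K)"
proof -
  have cpt: "compact (h ` (K \<inter> E k))" for k
    using assms by (intro compact_continuous_image compact_Int_closed) (auto intro: continuous_on_subset)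
  have un: "(\<Union>k. h ` (K \<inter> E k)) = h ` K"
    using assms(5) by blast
  have "(\<lambda>k. measure lborel (h ` (K \<inter> E k))) \<longlonglongrightarrow> measure lborel (\<Union>k. h ` (K \<inter> E k))"
  proof (rule Lim_measure_incseq)
    show "range (\<lambda>k. h ` (K \<inter> E k)) \<subseteq> sets lborel"
      using cpt by (auto intro: borel_compact)
    show "incseq (\<lambda>k. h ` (K \<inter> E k))"
      using \<open>incseq E\<close> by (auto simp: incseq_def)
    show "emeasure lborel (\<Union>k. h ` (K \<inter> E k)) \<noteq> \<infinity>"
      unfolding un using emeasure_compact_finite[OF compact_continuous_image[OF assms(2,1)]] by simp
  qed
  then show ?thesis by (simp add: un)
qed

lemma card_arcs_meeting_short_interval_le_2:
  fixes t :: "nat \<Rightarrow> real"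
  assumes mono: "\<And>i. i < n \<Longrightarrow> t i \<le> t (Suc i)"
    and gap: "\<And>i. i < n \<Longrightarrow> t i < t (Suc i) \<Longrightarrow> b - a < t (Suc i) - t i"
  shows "card {i. i < n \<and> t i < t (Suc i) \<and> a < t (Suc i) \<and> t i < b} \<le> 2"
proof (rule card_le_2_if_no_three_increasing)
  have mono_le: "t i \<le> t j" if "i \<le> j" "j \<le> n" for i j
    by (rule lift_Suc_mono_le_ivl[where N = "{..<n}"]) (use mono that in auto)
  fix i j l
  assume "i \<in> {i. i < n \<and> t i < t (Suc i) \<and> a < t (Suc i) \<and> t i < b}"
    "j \<in> {i. i < n \<and> t i < t (Suc i) \<and> a < t (Suc i) \<and> t i < b}"
    "l \<in> {i. i < n \<and> t i < t (Suc i) \<and> a < t (Suc i) \<and> t i < b}" and "i < j" "j < l"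
  then have "a < t (Suc i)" "t (Suc i) \<le> t j" "t j < t (Suc j)" "t (Suc j) \<le> t l" "t l < b" "j < n"
    using mono_le[of "Suc i" j] mono_le[of "Suc j" l] by simp_all
  then show False
    using gap[of j] by linarith
qed simp

lemma sum_measure_arcs_Int_short_interval_le:
  fixes g :: "real \<Rightarrow> complex" and t :: "nat \<Rightarrow> real"
  assumes g: "continuous_on {0..1} g" and E: "closed E"
    and t01: "\<And>i. i \<le> n \<Longrightarrow> t i \<in> {0..1}" and mono: "\<And>i. i < n \<Longrightarrow> t i \<le> t (Suc i)"
    and gap: "\<And>i. i < n \<Longrightarrow> t i < t (Suc i) \<Longrightarrow> b - a < t (Suc i) - t i"
    and "w \<ge> 0"
    and osc: "\<And>y z. y \<in> {a..b} \<inter> E \<inter> {0..1} \<Longrightarrow> z \<in> {a..b} \<inter> E \<inter> {0..1} \<Longrightarrow> norm (g y - g z) \<le> w"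
  shows "(\<Sum>i<n. measure lborel ((\<lambda>s. norm (g s - g (t i))) ` ({t i..t (Suc i)} \<inter> {a..b} \<inter> E))) \<le> 4 * w"
proof -
  define T where "T i = measure lborel ((\<lambda>s. norm (g s - g (t i))) ` ({t i..t (Suc i)} \<inter> {a..b} \<inter> E))" for i
  define I where "I = {i. i < n \<and> t i < t (Suc i) \<and> a < t (Suc i) \<and> t i < b}"
  have "T i = 0" if "i < n" "i \<notin> I" for i
    unfolding T_def
  proof (intro measure_image_subsingleton)
    fix y z assume "y \<in> {t i..t (Suc i)} \<inter> {a..b} \<inter> E" "z \<in> {t i..t (Suc i)} \<inter> {a..b} \<inter> E"
    with that mono[of i] show "y = z"
      by (auto simp: I_def)
  qed
  then have "(\<Sum>i<n. T i) = (\<Sum>i\<in>I. T i)"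
    by (intro sum.mono_neutral_right) (auto simp: I_def)
  also have "\<dots> \<le> (\<Sum>i\<in>I. 2 * w)"
  proof (intro sum_mono)
    fix i assume "i \<in> I"
    then have arc: "{t i..t (Suc i)} \<subseteq> {0..1}"
      using t01[of i] t01[of "Suc i"] by (auto simp: I_def)
    show "T i \<le> 2 * w"
      unfolding T_def
    proof (rule measure_image_norm_diff_le)
      show "compact ({t i..t (Suc i)} \<inter> {a..b} \<inter> E)"
        using E by (intro compact_Int_closed) auto
      show "continuous_on ({t i..t (Suc i)} \<inter> {a..b} \<inter> E) g"
        using arc by (intro continuous_on_subset[OF g]) auto
      show "norm (g y - g z) \<le> w"
        if "y \<in> {t i..t (Suc i)} \<inter> {a..b} \<inter> E" "z \<in> {t i..t (Suc i)} \<inter> {a..b} \<inter> E" for y z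
        using that arc by (intro osc) auto
    qed fact
  qed
  also have "\<dots> = real (card I) * (2 * w)"
    by simp
  also have "\<dots> \<le> 2 * (2 * w)"
    using card_arcs_meeting_short_interval_le_2[of n t b a] mono gap \<open>w \<ge> 0\<close>
    unfolding I_def by (intro mult_right_mono) auto
  finally show ?thesis by (simp add: T_def)
qed

lemma measure_image_Int_le_sum:
  fixes h :: "real \<Rightarrow> real" and N :: nat
  assumes "compact K" "continuous_on K h" "closed E" "K \<inter> E \<subseteq> (\<Union>m<N. {c m..c m + \<beta>})"
  shows "measure lborel (h ` (K \<inter> E)) \<le> (\<Sum>m<N. measure lborel (h ` (K \<inter> {c m..c m + \<beta>} \<inter> E)))"
proof -
  have cpt: "compact (h ` (K \<inter> X \<inter> E))" if "closed X" for X
    using assms that by (intro compact_continuous_image compact_Int_closed closed_Int)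
      (auto intro: continuous_on_subset)
  have "h ` (K \<inter> E) \<subseteq> (\<Union>m<N. h ` (K \<inter> {c m..c m + \<beta>} \<inter> E))"
    using assms(4) by blast
  moreover have "h ` (K \<inter> E) \<in> sets lborel"
    using cpt[of UNIV] by (simp add: borel_compact)
  moreover have "compact (\<Union>m<N. h ` (K \<inter> {c m..c m + \<beta>} \<inter> E))"
    by (intro compact_UN ballI cpt closed_atLeastAtMost finite_lessThan)
  ultimately have "measure lborel (h ` (K \<inter> E)) \<le> measure lborel (\<Union>m<N. h ` (K \<inter> {c m..c m + \<beta>} \<inter> E))"
    by (intro measure_mono_fmeasurable fmeasurable_compact)
  also have "\<dots> \<le> (\<Sum>m<N. measure lborel (h ` (K \<inter> {c m..c m + \<beta>} \<inter> E)))"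
    using cpt[OF closed_atLeastAtMost]
    by (intro measure_UNION_le finite_lessThan) (simp add: borel_compact del: Int_atLeastAtMost)
  finally show ?thesis .
qed

lemma ex_pos_less_positive_steps:
  fixes t :: "nat \<Rightarrow> real"
  obtains \<beta> where "\<beta> > 0" "\<And>i. i < n \<Longrightarrow> t i < t (Suc i) \<Longrightarrow> \<beta> < t (Suc i) - t i"
proof -
  have "\<forall>\<^sub>F \<beta> in at_right 0. 0 < \<beta> \<and> (\<forall>i\<in>{..<n}. t i < t (Suc i) \<longrightarrow> \<beta> < t (Suc i) - t i)"
  proof (intro eventually_conj eventually_ball_finite ballI)
    show "\<forall>\<^sub>F \<beta> in at_right 0. (0::real) < \<beta>"
      by (rule eventually_at_right_less)
    show "\<forall>\<^sub>F \<beta> in at_right 0. t i < t (Suc i) \<longrightarrow> \<beta> < t (Suc i) - t i" for i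
      by (cases "t i < t (Suc i)") (auto intro: eventually_at_rightI[of 0 "t (Suc i) - t i"])
  qed simp
  then show ?thesis
    using that eventually_happens'[OF trivial_limit_at_right_real] by blast
qed

lemma sum_measure_arcs_le_oscillation_cover:
  fixes g :: "real \<Rightarrow> complex" and t :: "nat \<Rightarrow> real"
  assumes g: "continuous_on {0..1} g" and E: "closed E"
    and t01: "\<And>i. i \<le> n \<Longrightarrow> t i \<in> {0..1}" and mono: "\<And>i. i < n \<Longrightarrow> t i \<le> t (Suc i)"
    and gap: "\<And>i. i < n \<Longrightarrow> t i < t (Suc i) \<Longrightarrow> \<beta> < t (Suc i) - t i"
    and cover: "oscillation_cover g (E \<inter> {0..1}) \<beta> B"
  shows "(\<Sum>i<n. measure lborel ((\<lambda>s. norm (g s - g (t i))) ` ({t i..t (Suc i)} \<inter> E))) \<le> 4 * B"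
proof -
  obtain N :: nat and c w \<beta>' where "\<beta>' \<le> \<beta>" and w: "\<forall>m<N. 0 \<le> w m" and "(\<Sum>m<N. w m) \<le> B"
    and covered: "E \<inter> {0..1} \<subseteq> (\<Union>m<N. {c m..c m + \<beta>'})"
    and osc: "\<forall>m<N. \<forall>y\<in>{c m..c m + \<beta>'} \<inter> (E \<inter> {0..1}). \<forall>z\<in>{c m..c m + \<beta>'} \<inter> (E \<inter> {0..1}).
      norm (g y - g z) \<le> w m"
    using cover unfolding oscillation_cover_def by blast
  define h where "h i s = norm (g s - g (t i))" for i s
  define T where "T i m = measure lborel (h i ` ({t i..t (Suc i)} \<inter> {c m..c m + \<beta>'} \<inter> E))" for i m
  have "measure lborel (h i ` ({t i..t (Suc i)} \<inter> E)) \<le> (\<Sum>m<N. T i m)" if "i < n" for i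
    unfolding T_def
  proof (rule measure_image_Int_le_sum)
    have "{t i..t (Suc i)} \<subseteq> {0..1}"
      using t01[of i] t01[of "Suc i"] that by auto
    then show "continuous_on {t i..t (Suc i)} (h i)"
      unfolding h_def by (intro continuous_intros continuous_on_subset[OF g])
    show "{t i..t (Suc i)} \<inter> E \<subseteq> (\<Union>m<N. {c m..c m + \<beta>'})"
      using covered \<open>{t i..t (Suc i)} \<subseteq> {0..1}\<close> by blast
  qed (use E in auto)
  then have "(\<Sum>i<n. measure lborel (h i ` ({t i..t (Suc i)} \<inter> E))) \<le> (\<Sum>i<n. \<Sum>m<N. T i m)"
    by (intro sum_mono) auto
  also have "\<dots> = (\<Sum>m<N. \<Sum>i<n. T i m)"
    by (rule sum.swap)
  also have "\<dots> \<le> (\<Sum>m<N. 4 * w m)"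
  proof (intro sum_mono)
    fix m assume "m \<in> {..<N}"
    then show "(\<Sum>i<n. T i m) \<le> 4 * w m"
      unfolding T_def h_def using \<open>\<beta>' \<le> \<beta>\<close> gap
      by (intro sum_measure_arcs_Int_short_interval_le g E t01 mono w[rule_format] osc[rule_format]) force+
  qed
  also have "\<dots> \<le> 4 * B"
    using \<open>(\<Sum>m<N. w m) \<le> B\<close> by (simp add: sum_distrib_left[symmetric])
  finally show ?thesis by (simp add: h_def)
qed

lemma rectifiable_curve_if_oscillation_covers:
  fixes g :: "real \<Rightarrow> complex"
  assumes g: "continuous_on {0..1} g"
    and E: "\<And>k. closed (E k)" "incseq E" "{0..1} \<subseteq> (\<Union>k. E k)"
    and cover: "\<And>k \<beta>. \<beta> > 0 \<Longrightarrow> oscillation_cover g (E k \<inter> {0..1}) \<beta> B"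
  shows "rectifiable_curve g"
  unfolding rectifiable_curve_def
proof (intro exI allI impI)
  fix n :: nat and t :: "nat \<Rightarrow> real"
  assume "(\<forall>i\<le>n. t i \<in> {0..1}) \<and> (\<forall>i<n. t i \<le> t (Suc i))"
  then have t01: "\<And>i. i \<le> n \<Longrightarrow> t i \<in> {0..1}" and mono: "\<And>i. i < n \<Longrightarrow> t i \<le> t (Suc i)"
    by auto
  define h where "h i s = norm (g s - g (t i))" for i s
  have arc: "{t i..t (Suc i)} \<subseteq> {0..1}" if "i < n" for i
    using t01[of i] t01[of "Suc i"] that by auto
  obtain \<beta> where "\<beta> > 0" and gap: "\<And>i. i < n \<Longrightarrow> t i < t (Suc i) \<Longrightarrow> \<beta> < t (Suc i) - t i"
    using ex_pos_less_positive_steps by blast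
  have "(\<Sum>i<n. norm (g (t (Suc i)) - g (t i))) \<le> (\<Sum>i<n. measure lborel (h i ` {t i..t (Suc i)}))"
    unfolding h_def using mono arc
    by (intro sum_mono norm_diff_le_measure_image continuous_on_subset[OF g]) auto
  also have "\<dots> \<le> 4 * B"
  proof (rule tendsto_upperbound)
    show "(\<lambda>k. \<Sum>i<n. measure lborel (h i ` ({t i..t (Suc i)} \<inter> E k)))
        \<longlonglongrightarrow> (\<Sum>i<n. measure lborel (h i ` {t i..t (Suc i)}))"
    proof (intro tendsto_sum measure_image_Int_incseq_tendsto)
      fix i assume "i \<in> {..<n}"
      then have "{t i..t (Suc i)} \<subseteq> {0..1}"
        using arc by blast
      then show "continuous_on {t i..t (Suc i)} (h i)"
        unfolding h_def by (intro continuous_intros continuous_on_subset[OF g])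
      show "{t i..t (Suc i)} \<subseteq> (\<Union>k. E k)"
        using \<open>{t i..t (Suc i)} \<subseteq> {0..1}\<close> E(3) by blast
    qed (use E in auto)
    show "\<forall>\<^sub>F k in sequentially. (\<Sum>i<n. measure lborel (h i ` ({t i..t (Suc i)} \<inter> E k))) \<le> 4 * B"
      unfolding h_def using t01 mono gap cover[OF \<open>\<beta> > 0\<close>]
      by (intro always_eventually allI sum_measure_arcs_le_oscillation_cover g E(1))
  qed simp
  finally show "(\<Sum>i<n. norm (g (t (Suc i)) - g (t i))) \<le> 4 * B" .
qed

section \<open>Chords of a circle\<close>

lemma norm_cis_diff: "norm (cis a - cis b) = 2 * \<bar>sin ((a - b) / 2)\<bar>"
proof -
  have "(norm (cis a - cis b))\<^sup>2 = (cos a - cos b)\<^sup>2 + (sin a - sin b)\<^sup>2"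
    by (simp add: cmod_power2)
  also have "\<dots> = 2 - 2 * cos (a - b)"
    by (simp add: cos_diff power2_eq_square algebra_simps)
  also have "\<dots> = 2 - 2 * cos (2 * ((a - b) / 2))"
    by (simp only: mult_2 field_sum_of_halves)
  also have "\<dots> = (2 * \<bar>sin ((a - b) / 2)\<bar>)\<^sup>2"
    unfolding cos_double_sin by (simp add: power_mult_distrib)
  finally show ?thesis
    by (rule power2_eq_imp_eq) auto
qed

lemma sin_ge_half_self:
  fixes x :: real
  assumes "0 \<le> x" "x \<le> pi / 2"
  shows "x / 2 \<le> sin x"
proof -
  have "\<bar>sin x - (\<Sum>m<3. sin_coeff m * x ^ m)\<bar> \<le> inverse (fact 3) * \<bar>x\<bar> ^ 3"
    by (rule Maclaurin_sin_bound)
  then have "\<bar>sin x - x\<bar> \<le> x ^ 3 / 6"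
    using assms by (simp add: sin_coeff_def eval_nat_numeral)
  then have "x - x ^ 3 / 6 \<le> sin x"
    using abs_ge_minus_self[of "sin x - x"] by linarith
  moreover have "x\<^sup>2 \<le> 3"
  proof -
    have "x\<^sup>2 \<le> (pi / 2)\<^sup>2"
      using assms by (intro power_mono) auto
    also have "\<dots> \<le> (16 / 10)\<^sup>2"
      using pi_approx by (intro power_mono) (auto simp: abs_le_iff)
    finally show ?thesis by (simp add: power_divide)
  qed
  then have "x ^ 3 / 6 \<le> x / 2"
    using assms mult_left_mono[of "x\<^sup>2" 3 x] by (simp add: power3_eq_cube power2_eq_square)
  ultimately show ?thesis by linarith
qed

definition circle_param :: "real \<Rightarrow> real \<Rightarrow> complex" where
  "circle_param R s = of_real R * cis (2 * pi * s)"

lemma continuous_on_circle_param [continuous_intros]: "continuous_on A (circle_param R)"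
  unfolding circle_param_def by (intro continuous_intros)

lemma norm_circle_param [simp]: "R \<ge> 0 \<Longrightarrow> norm (circle_param R s) = R"
  by (simp add: circle_param_def norm_mult)

lemma norm_circle_param_diff:
  assumes "R \<ge> 0"
  shows "norm (circle_param R s - circle_param R u) = 2 * R * \<bar>sin (pi * (s - u))\<bar>"
proof -
  have "norm (circle_param R s - circle_param R u) = R * norm (cis (2 * pi * s) - cis (2 * pi * u))"
    unfolding circle_param_def using assms by (simp add: right_diff_distrib[symmetric] norm_mult)
  moreover have "(2 * pi * s - 2 * pi * u) / 2 = pi * (s - u)"
    by (simp add: field_simps)
  then have "norm (cis (2 * pi * s) - cis (2 * pi * u)) = 2 * \<bar>sin (pi * (s - u))\<bar>"
    by (simp only: norm_cis_diff)
  ultimately show ?thesis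
    by simp
qed

lemma norm_circle_param_diff_le:
  assumes "R \<ge> 0"
  shows "norm (circle_param R s - circle_param R u) \<le> 2 * pi * R * \<bar>s - u\<bar>"
proof -
  have "R * \<bar>sin (pi * (s - u))\<bar> \<le> R * (pi * \<bar>s - u\<bar>)"
    using abs_sin_x_le_abs_x[of "pi * (s - u)"] assms by (intro mult_left_mono) (auto simp: abs_mult)
  then show ?thesis
    using assms by (simp add: norm_circle_param_diff mult.left_commute)
qed

lemma norm_circle_param_diff_ge:
  assumes "R \<ge> 0" "\<bar>s - u\<bar> \<le> 1 / 2"
  shows "pi * R * \<bar>s - u\<bar> \<le> norm (circle_param R s - circle_param R u)"
proof -
  have "pi * \<bar>s - u\<bar> / 2 \<le> sin (pi * \<bar>s - u\<bar>)"
    using assms by (intro sin_ge_half_self) auto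
  also have "sin (pi * \<bar>s - u\<bar>) = \<bar>sin (pi * (s - u))\<bar>"
  proof -
    have "0 \<le> sin (pi * \<bar>s - u\<bar>)"
      using assms by (intro sin_ge_zero) auto
    moreover have "pi * \<bar>s - u\<bar> = pi * (s - u) \<or> pi * \<bar>s - u\<bar> = - (pi * (s - u))"
      by (auto simp: abs_if algebra_simps)
    ultimately show ?thesis
      by (auto simp del: mult_minus_right)
  qed
  finally have "pi * \<bar>s - u\<bar> \<le> 2 * \<bar>sin (pi * (s - u))\<bar>"
    by simp
  then have "R * (pi * \<bar>s - u\<bar>) \<le> R * (2 * \<bar>sin (pi * (s - u))\<bar>)"
    using assms(1) by (rule mult_left_mono)
  then show ?thesis
    using assms(1) by (simp add: norm_circle_param_diff mult_ac)
qed

section \<open>Images of balls under injective continuous maps\<close>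

lemma sum_measure_le_measure_Diff:
  assumes "finite I" and F: "\<And>i. i \<in> I \<Longrightarrow> F i \<in> sets M"
    and "pairwise (\<lambda>i j. disjnt (F i) (F j)) I" and sub: "(\<Union>i\<in>I. F i) \<subseteq> A - B"
    and "A \<in> fmeasurable M" "B \<in> sets M" "B \<subseteq> A"
  shows "(\<Sum>i\<in>I. measure M (F i)) \<le> measure M A - measure M B"
proof -
  have "F i \<in> fmeasurable M" if "i \<in> I" for i
  proof (rule fmeasurableI2[OF \<open>A \<in> fmeasurable M\<close> _ F[OF that]])
    show "F i \<subseteq> A"
      using sub that by blast
  qed
  then have "(\<Sum>i\<in>I. measure M (F i)) = measure M (\<Union>i\<in>I. F i)"
    using measure_UNION'[OF assms(1) _ assms(3)] by simp
  also have "\<dots> \<le> measure M (A - B)"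
  proof (rule measure_mono_fmeasurable[OF sub])
    show "(\<Union>i\<in>I. F i) \<in> sets M"
      using F \<open>finite I\<close> by (intro sets.finite_UN)
    show "A - B \<in> fmeasurable M"
      using assms(5,6) by (rule fmeasurable_Diff)
  qed
  also have "\<dots> = measure M A - measure M B"
    using assms(5-7) by (rule measurable_measure_Diff)
  finally show ?thesis .
qed

context
  fixes f :: "'a::euclidean_space \<Rightarrow> 'a" and S :: "'a set"
  assumes cont: "continuous_on S f" and inj: "inj_on f S"
begin

lemma open_image_of_inj_on:
  assumes "V \<subseteq> S" "open V"
  shows "open (f ` V)"
  using invariance_of_domain[of V f] assms cont inj continuous_on_subset inj_on_subset by blast

lemma lmeasurable_image_ball:
  assumes "cball x r \<subseteq> S"
  shows "f ` ball x r \<in> lmeasurable"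
proof (rule lmeasurable_open)
  have "compact (f ` cball x r)"
    using assms cont by (intro compact_continuous_image) (auto intro: continuous_on_subset)
  then show "bounded (f ` ball x r)"
    by (rule bounded_subset[OF compact_imp_bounded]) auto
  show "open (f ` ball x r)"
    using assms by (intro open_image_of_inj_on) auto
qed

lemma frontier_image_ball_subset:
  assumes "cball x r \<subseteq> S"
  shows "frontier (f ` ball x r) \<subseteq> f ` sphere x r"
proof -
  have "compact (f ` cball x r)"
    using assms cont by (intro compact_continuous_image) (auto intro: continuous_on_subset)
  then have "closure (f ` ball x r) \<subseteq> f ` cball x r"
    by (intro closure_minimal) (auto intro: compact_imp_closed)
  moreover have "interior (f ` ball x r) = f ` ball x r"
    using assms by (intro interior_open open_image_of_inj_on) auto
  moreover have "f ` cball x r - f ` ball x r \<subseteq> f ` sphere x r"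
  proof
    fix v assume "v \<in> f ` cball x r - f ` ball x r"
    then obtain y where "y \<in> cball x r" "y \<notin> ball x r" "v = f y"
      by blast
    then show "v \<in> f ` sphere x r"
      by auto
  qed
  ultimately show ?thesis
    by (auto simp: frontier_def)
qed

lemma ball_subset_image_ball:
  assumes "cball x r \<subseteq> S" "r > 0" "\<And>z. z \<in> sphere x r \<Longrightarrow> m \<le> dist (f x) (f z)"
  shows "ball (f x) m \<subseteq> f ` ball x r"
proof (rule ccontr)
  assume "\<not> ?thesis"
  then obtain v where "v \<in> ball (f x) m" "v \<notin> f ` ball x r"
    by blast
  moreover from this have "m > 0"
    by (meson le_less_trans mem_ball zero_le_dist)
  then have "f x \<in> ball (f x) m \<inter> f ` ball x r"
    using \<open>r > 0\<close> by auto
  ultimately have "ball (f x) m \<inter> frontier (f ` ball x r) \<noteq> {}"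
    by (intro connected_Int_frontier) blast+
  then obtain z where "z \<in> sphere x r" "f z \<in> ball (f x) m"
    using frontier_image_ball_subset[OF assms(1)] by blast
  then show False
    using assms(3) by fastforce
qed

lemma image_cball_subset_cball:
  assumes "2 \<le> DIM('a)" "cball x r \<subseteq> S" "\<And>z. z \<in> sphere x r \<Longrightarrow> dist (f x) (f z) \<le> K"
  shows "f ` cball x r \<subseteq> cball (f x) K"
proof (rule ccontr)
  assume "\<not> ?thesis"
  then obtain y where y: "y \<in> cball x r" "f y \<notin> cball (f x) K"
    by blast
  have "y \<in> ball x r"
  proof (rule ccontr)
    assume "y \<notin> ball x r"
    then have "y \<in> sphere x r"
      using y by auto
    then show False
      using y assms(3) by auto
  qed
  have "bounded (f ` cball x r)"
    using assms(2) cont by (intro compact_imp_bounded compact_continuous_image)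
      (auto intro: continuous_on_subset)
  have "- cball (f x) K - f ` ball x r \<noteq> {}"
  proof
    assume "- cball (f x) K - f ` ball x r = {}"
    then have "UNIV \<subseteq> f ` cball x r \<union> cball (f x) K"
      by auto
    with \<open>bounded (f ` cball x r)\<close> have "bounded (UNIV :: 'a set)"
      by (meson bounded_Un bounded_cball bounded_subset)
    then show False
      using not_bounded_UNIV by blast
  qed
  moreover have "- cball (f x) K \<inter> f ` ball x r \<noteq> {}"
    using y \<open>y \<in> ball x r\<close> by blast
  ultimately have "- cball (f x) K \<inter> frontier (f ` ball x r) \<noteq> {}"
    using assms(1) by (intro connected_Int_frontier connected_complement_bounded_convex) auto
  then obtain z where "z \<in> sphere x r" "f z \<notin> cball (f x) K"
    using frontier_image_ball_subset[OF assms(2)] by blast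
  then show False
    using assms(3) by fastforce
qed

lemma sum_measure_image_disjoint_balls_le:
  fixes c :: "'b \<Rightarrow> 'a"
  assumes "cball 0 (R + \<delta>) \<subseteq> S" "\<delta> > 0" "finite I" "\<And>i. i \<in> I \<Longrightarrow> norm (c i) = R"
    and sep: "\<And>i j. i \<in> I \<Longrightarrow> j \<in> I \<Longrightarrow> i \<noteq> j \<Longrightarrow> 2 * \<delta> \<le> dist (c i) (c j)"
  shows "(\<Sum>i\<in>I. measure lebesgue (f ` ball (c i) \<delta>))
    \<le> measure lebesgue (f ` ball 0 (R + \<delta>)) - measure lebesgue (f ` ball 0 (R - \<delta>))"
proof (rule sum_measure_le_measure_Diff[OF \<open>finite I\<close>])
  have in_cball: "cball (c i) \<delta> \<subseteq> cball 0 (R + \<delta>)" if "i \<in> I" for i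
    using assms(4)[OF that] by (auto simp: cball_subset_cball_iff dist_norm)
  have in_ball: "ball (c i) \<delta> \<subseteq> ball 0 (R + \<delta>)" if "i \<in> I" for i
    using assms(4)[OF that] by (auto simp: ball_subset_ball_iff dist_norm)
  have out_ball: "ball (c i) \<delta> \<inter> ball 0 (R - \<delta>) = {}" if "i \<in> I" for i
    using assms(4)[OF that] by (intro disjoint_ballI) simp
  have outer_S: "ball 0 (R + \<delta>) \<subseteq> S"
    using assms(1) ball_subset_cball by blast
  have inner_outer: "ball 0 (R - \<delta>) \<subseteq> ball 0 (R + \<delta>)"
    using \<open>\<delta> > 0\<close> by (intro subset_ball) simp
  show "f ` ball (c i) \<delta> \<in> sets lebesgue" if "i \<in> I" for i
    using lmeasurable_image_ball in_cball[OF that] assms(1) by blast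
  show "f ` ball 0 (R + \<delta>) \<in> fmeasurable lebesgue"
    using assms(1) by (rule lmeasurable_image_ball)
  have "cball 0 (R - \<delta>) \<subseteq> cball 0 (R + \<delta>)"
    using \<open>\<delta> > 0\<close> by (intro subset_cball) simp
  then show "f ` ball 0 (R - \<delta>) \<in> sets lebesgue"
    using assms(1) by (intro fmeasurableD lmeasurable_image_ball) blast
  show "f ` ball 0 (R - \<delta>) \<subseteq> f ` ball 0 (R + \<delta>)"
    using inner_outer by (rule image_mono)
  show "pairwise (\<lambda>i j. disjnt (f ` ball (c i) \<delta>) (f ` ball (c j) \<delta>)) I"
  proof (intro pairwiseI)
    fix i j assume "i \<in> I" "j \<in> I" "i \<noteq> j"
    then have "ball (c i) \<delta> \<inter> ball (c j) \<delta> = {}"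
      using sep[of i j] by (intro disjoint_ballI) simp
    moreover have "ball (c i) \<delta> \<union> ball (c j) \<delta> \<subseteq> S"
      using in_ball \<open>i \<in> I\<close> \<open>j \<in> I\<close> outer_S by blast
    ultimately show "disjnt (f ` ball (c i) \<delta>) (f ` ball (c j) \<delta>)"
      using inj_on_image_Int[OF inj, of "ball (c i) \<delta>" "ball (c j) \<delta>"] by (simp add: disjnt_def)
  qed
  show "(\<Union>i\<in>I. f ` ball (c i) \<delta>) \<subseteq> f ` ball 0 (R + \<delta>) - f ` ball 0 (R - \<delta>)"
  proof
    fix v assume "v \<in> (\<Union>i\<in>I. f ` ball (c i) \<delta>)"
    then obtain i y where "i \<in> I" "y \<in> ball (c i) \<delta>" "v = f y"
      by blast
    moreover from this have "y \<in> ball 0 (R + \<delta>)" "y \<notin> ball 0 (R - \<delta>)"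
      using in_ball out_ball by blast+
    moreover have "y \<in> S" "ball 0 (R - \<delta>) \<subseteq> S"
      using calculation outer_S inner_outer by blast+
    then have "f y \<notin> f ` ball 0 (R - \<delta>)"
      using inj_on_image_mem_iff[OF inj] \<open>y \<notin> ball 0 (R - \<delta>)\<close> by blast
    ultimately show "v \<in> f ` ball 0 (R + \<delta>) - f ` ball 0 (R - \<delta>)"
      by simp
  qed
qed

end

section \<open>Stretching and bounded distortion\<close>

lemma norm_le_max_stretch:
  assumes "continuous_on (sphere x r) f" "y \<in> sphere x r"
  shows "norm (f y - f x) \<le> max_stretch f x r"
proof -
  have "compact ((\<lambda>y. norm (f y - f x)) ` sphere x r)"
    using assms(1) by (intro compact_continuous_image continuous_intros) auto
  then show ?thesis
    unfolding max_stretch_def using assms(2)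
    by (intro cSup_upper bounded_imp_bdd_above compact_imp_bounded) auto
qed

lemma min_stretch_le_norm:
  assumes "y \<in> sphere x r"
  shows "min_stretch f x r \<le> norm (f y - f x)"
  unfolding min_stretch_def using assms by (intro cInf_lower bdd_belowI[of _ 0]) auto

lemma min_stretch_nonneg:
  assumes "r \<ge> 0"
  shows "0 \<le> min_stretch f x r"
  unfolding min_stretch_def using assms by (intro cInf_greatest) auto

lemma min_stretch_pos:
  assumes "continuous_on (sphere x r) f" "inj_on f (cball x r)" "r > 0"
  shows "0 < min_stretch f x r"
proof -
  let ?Z = "(\<lambda>y. norm (f y - f x)) ` sphere x r"
  have "compact ?Z"
    using assms(1) by (intro compact_continuous_image continuous_intros) auto
  moreover have "?Z \<noteq> {}"
    using assms(3) by auto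
  ultimately have "Inf ?Z \<in> ?Z"
    by (intro closed_contains_Inf bounded_imp_bdd_below compact_imp_bounded compact_imp_closed)
  then obtain y where "y \<in> sphere x r" "min_stretch f x r = norm (f y - f x)"
    unfolding min_stretch_def by auto
  moreover have "f y \<noteq> f x"
    using calculation assms(2,3) by (auto dest: inj_onD)
  ultimately show ?thesis
    by simp
qed

lemma pi_min_stretch_sq_le_measure_image_ball:
  assumes "continuous_on S f" "inj_on f S" "cball x r \<subseteq> S" "r > 0"
  shows "pi * (min_stretch f x r)\<^sup>2 \<le> measure lebesgue (f ` ball x r)"
proof -
  have "ball (f x) (min_stretch f x r) \<subseteq> f ` ball x r"
    using assms min_stretch_le_norm[of _ x r f]
    by (intro ball_subset_image_ball) (auto simp: dist_norm norm_minus_commute)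
  then have "measure lebesgue (ball (f x) (min_stretch f x r)) \<le> measure lebesgue (f ` ball x r)"
    using lmeasurable_image_ball[OF assms(1-3)] by (intro measure_mono_fmeasurable) auto
  then show ?thesis
    using min_stretch_nonneg[of r f x] assms(4) by (simp add: content_ball unit_ball_vol_2)
qed

lemma measure_image_ball_pos:
  fixes f :: "complex \<Rightarrow> complex"
  assumes "continuous_on S f" "inj_on f S" "cball x r \<subseteq> S" "r > 0"
  shows "0 < measure lebesgue (f ` ball x r)"
proof -
  have "0 < min_stretch f x r"
    using assms(1,3) sphere_cball continuous_on_subset inj_on_subset[OF assms(2,3)] \<open>r > 0\<close>
    by (metis min_stretch_pos)
  then have "0 < pi * (min_stretch f x r)\<^sup>2"
    by simp
  also have "\<dots> \<le> measure lebesgue (f ` ball x r)"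
    using assms by (rule pi_min_stretch_sq_le_measure_image_ball)
  finally show ?thesis .
qed

definition bounded_distortion :: "(complex \<Rightarrow> complex) \<Rightarrow> real \<Rightarrow> real \<Rightarrow> complex \<Rightarrow> bool" where
  "bounded_distortion f H \<rho> x \<longleftrightarrow>
     (\<forall>r\<in>{0<..<\<rho>}. \<forall>y\<in>sphere x r. \<forall>z\<in>sphere x r. norm (f y - f x) \<le> H * norm (f z - f x))"

lemma bounded_distortion_mono:
  assumes "bounded_distortion f H \<rho> x" "\<rho>' \<le> \<rho>"
  shows "bounded_distortion f H \<rho>' x"
  unfolding bounded_distortion_def
proof (intro ballI)
  fix r y z assume "r \<in> {0<..<\<rho>'}" "y \<in> sphere x r" "z \<in> sphere x r"
  moreover from this have "r \<in> {0<..<\<rho>}"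
    using assms(2) by auto
  ultimately show "norm (f y - f x) \<le> H * norm (f z - f x)"
    using assms(1) unfolding bounded_distortion_def by blast
qed

lemma bounded_distortion_if_eventually_stretch_ratio_less:
  fixes f :: "complex \<Rightarrow> complex"
  assumes cont: "continuous_on S f" and inj: "inj_on f S" and "open S" "x \<in> S" "H > 0"
    and ratio: "\<forall>\<^sub>F r in at_right 0. max_stretch f x r / min_stretch f x r < H"
  shows "\<exists>\<rho>>0. bounded_distortion f H \<rho> x"
proof -
  obtain e where "e > 0" "cball x e \<subseteq> S"
    using \<open>open S\<close> \<open>x \<in> S\<close> open_contains_cball by blast
  then have "\<forall>\<^sub>F r in at_right 0. cball x r \<subseteq> S"
    by (intro eventually_at_rightI[of 0 e]) auto
  with ratio have "\<forall>\<^sub>F r in at_right 0. max_stretch f x r / min_stretch f x r < H \<and> cball x r \<subseteq> S"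
    by (rule eventually_conj)
  then obtain \<rho> where "\<rho> > 0" and \<rho>: "\<And>r. 0 < r \<Longrightarrow> r < \<rho> \<Longrightarrow>
      max_stretch f x r / min_stretch f x r < H \<and> cball x r \<subseteq> S"
    by (auto simp: eventually_at_right_field)
  have "bounded_distortion f H \<rho> x"
    unfolding bounded_distortion_def
  proof (intro ballI)
    fix r y z assume r: "r \<in> {0<..<\<rho>}" and y: "y \<in> sphere x r" and z: "z \<in> sphere x r"
    then have "cball x r \<subseteq> S" and ratio_r: "max_stretch f x r / min_stretch f x r < H"
      using \<rho> by auto
    then have cont_r: "continuous_on (sphere x r) f"
      using cont sphere_cball continuous_on_subset by blast
    \<comment> \<open>Injectivity rules out the junk value of the ratio when the divisor is 0.\<close>
    have "0 < min_stretch f x r"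
      using cont_r inj_on_subset[OF inj \<open>cball x r \<subseteq> S\<close>] r by (intro min_stretch_pos) auto
    have "norm (f y - f x) \<le> max_stretch f x r"
      using cont_r y by (rule norm_le_max_stretch)
    also have "\<dots> \<le> H * min_stretch f x r"
      using ratio_r \<open>0 < min_stretch f x r\<close> by (simp add: divide_less_eq)
    also have "\<dots> \<le> H * norm (f z - f x)"
      using min_stretch_le_norm[OF z] \<open>H > 0\<close> by (intro mult_left_mono) auto
    finally show "norm (f y - f x) \<le> H * norm (f z - f x)" .
  qed
  then show ?thesis
    using \<open>\<rho> > 0\<close> by blast
qed

lemma quasiconformal_on_imp_bounded_distortion:
  assumes "quasiconformal_on S f"
  obtains H where "H > 0" "\<And>x. x \<in> S \<Longrightarrow> \<exists>\<rho>>0. bounded_distortion f H \<rho> x"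
proof -
  obtain H0 where "open S" "inj_on f S" "continuous_on S f"
    and H0: "\<And>x. x \<in> S \<Longrightarrow> Limsup (at_right 0) (\<lambda>r. ereal (max_stretch f x r / min_stretch f x r)) \<le> ereal H0"
    using assms unfolding quasiconformal_on_def by blast
  have "\<forall>\<^sub>F r in at_right 0. max_stretch f x r / min_stretch f x r < \<bar>H0\<bar> + 1" if "x \<in> S" for x
  proof -
    have "Limsup (at_right 0) (\<lambda>r. ereal (max_stretch f x r / min_stretch f x r)) < ereal (\<bar>H0\<bar> + 1)"
      using H0[OF that] by (rule le_less_trans) simp
    then show ?thesis
      by (auto dest: Limsup_lessD)
  qed
  then show ?thesis
    using \<open>continuous_on S f\<close> \<open>inj_on f S\<close> \<open>open S\<close>
    by (intro that[of "\<bar>H0\<bar> + 1"] bounded_distortion_if_eventually_stretch_ratio_less) auto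
qed

lemma norm_le_min_stretch_if_bounded_distortion:
  assumes "continuous_on S f" "inj_on f S" "cball x \<delta> \<subseteq> S" "bounded_distortion f H \<rho> x"
    and "0 < \<delta>" "\<delta> < \<rho>" "H > 0" "z \<in> cball x \<delta>"
  shows "norm (f z - f x) \<le> H * min_stretch f x \<delta>"
proof -
  have "norm (f y - f x) \<le> H * min_stretch f x \<delta>" if y: "y \<in> sphere x \<delta>" for y
  proof -
    have "norm (f y - f x) / H \<le> min_stretch f x \<delta>"
      unfolding min_stretch_def
    proof (rule cInf_greatest)
      fix w assume "w \<in> (\<lambda>y. norm (f y - f x)) ` sphere x \<delta>"
      then obtain y' where "y' \<in> sphere x \<delta>" "w = norm (f y' - f x)"
        by blast
      then show "norm (f y - f x) / H \<le> w"
        using assms(4-7) y by (auto simp: bounded_distortion_def field_simps)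
    qed (use \<open>0 < \<delta>\<close> in auto)
    then show ?thesis
      using \<open>H > 0\<close> by (simp add: field_simps)
  qed
  then have "f ` cball x \<delta> \<subseteq> cball (f x) (H * min_stretch f x \<delta>)"
    using assms(1-3) by (intro image_cball_subset_cball) (auto simp: dist_norm norm_minus_commute)
  then have "f z \<in> cball (f x) (H * min_stretch f x \<delta>)"
    using assms(8) by blast
  then show ?thesis
    by (simp add: dist_norm norm_minus_commute)
qed

section \<open>Packing the circle with cells\<close>

lemma ex_cell_mem:
  fixes N :: nat
  assumes "N > 0" "s \<in> {0..1}"
  shows "\<exists>m<N. s \<in> {real m / N..real m / N + 1 / N}"
proof (cases "s = 1")
  case True
  then show ?thesis
    using assms by (intro exI[of _ "N - 1"]) (auto simp: field_simps)
next
  case False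
  define m where "m = nat \<lfloor>s * N\<rfloor>"
  have "real m \<le> s * N" "s * N < real m + 1"
    using assms by (auto simp: m_def)
  moreover have "s * N < N"
    using assms False by simp
  ultimately have "real m < real N"
    by linarith
  moreover have "real m / N \<le> s" "s \<le> real m / N + 1 / N"
    using assms \<open>real m \<le> s * N\<close> \<open>s * N < real m + 1\<close> by (auto simp: field_simps)
  ultimately have "m < N" "s \<in> {real m / N..real m / N + 1 / N}"
    by auto
  then show ?thesis
    by blast
qed

lemma circle_param_cells_separated:
  fixes N n m m' :: nat
  assumes "R \<ge> 0" "N = 2 * n" "m < m'" "m' < N" "m mod 5 = m' mod 5" "m < n \<longleftrightarrow> m' < n"
    and p: "p \<in> {real m / N..real m / N + 1 / N}" and p': "p' \<in> {real m' / N..real m' / N + 1 / N}"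
  shows "4 * pi * R / N \<le> dist (circle_param R p) (circle_param R p')"
proof -
  have "N > 0"
    using assms(3,4) by linarith
  have half: "real n / N = 1 / 2"
    using assms(2) \<open>N > 0\<close> by simp
  have p_bounds: "real m / N \<le> p" "p' \<le> (real m' + 1) / N"
    using p p' by (auto simp: add_divide_distrib)
  have "m + 5 \<le> m'"
    using assms(3,5) by presburger
  then have "4 / N \<le> real m' / N - (real m / N + 1 / N)"
    using \<open>N > 0\<close> by (simp add: field_simps)
  then have "4 / N \<le> p' - p"
    using p p' by auto
  moreover have "p' - p \<le> 1 / 2"
  proof (cases "m' < n")
    case True
    then have "(real m' + 1) / N \<le> real n / N"
      by (simp add: divide_right_mono)
    then show ?thesis
      using p_bounds half divide_nonneg_nonneg[of "real m" "real N"] by linarith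
  next
    case False
    then have "real n / N \<le> real m / N" "(real m' + 1) / N \<le> 1"
      using assms(4,6) \<open>N > 0\<close> by (simp_all add: divide_right_mono field_simps)
    then show ?thesis
      using p_bounds half by linarith
  qed
  moreover have "0 \<le> 4 / real N"
    by simp
  ultimately have "4 / N \<le> \<bar>p - p'\<bar>" "\<bar>p - p'\<bar> \<le> 1 / 2"
    by linarith+
  then have "pi * R * (4 / N) \<le> pi * R * \<bar>p - p'\<bar>"
    using assms(1) by (intro mult_left_mono) auto
  also have "\<dots> \<le> norm (circle_param R p - circle_param R p')"
    using assms(1) \<open>\<bar>p - p'\<bar> \<le> 1 / 2\<close> by (rule norm_circle_param_diff_ge)
  finally show ?thesis
    by (simp add: dist_norm mult_ac)
qed

lemma sum_measure_image_cell_balls_le: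
  fixes f :: "complex \<Rightarrow> complex" and N n :: nat and p :: "nat \<Rightarrow> real"
  assumes cont: "continuous_on S f" and inj: "inj_on f S" and "cball 0 (R + \<delta>) \<subseteq> S" "R > 0"
    and N: "N = 2 * n" "n > 0" and \<delta>: "\<delta> = 2 * pi * R / N" and "G \<subseteq> {..<N}"
    and p: "\<And>m. m \<in> G \<Longrightarrow> p m \<in> {real m / N..real m / N + 1 / N}"
  shows "(\<Sum>m\<in>G. measure lebesgue (f ` ball (circle_param R (p m)) \<delta>))
    \<le> 10 * (measure lebesgue (f ` ball 0 (R + \<delta>)) - measure lebesgue (f ` ball 0 (R - \<delta>)))"
proof -
  define x where "x m = circle_param R (p m)" for m
  define cl where "cl m = (m mod 5, m < n)" for m
  have "\<delta> > 0" "finite G"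
    using N \<open>R > 0\<close> \<open>G \<subseteq> {..<N}\<close> finite_subset by (auto simp: \<delta>)
  \<comment> \<open>Cells in one class are at least four cells apart and lie in one half of the circle,
    so their centres are 2\<delta>-separated and the ten classes give disjoint balls in the annulus.\<close>
  have class_le: "(\<Sum>m\<in>{m \<in> G. cl m = c}. measure lebesgue (f ` ball (x m) \<delta>))
      \<le> measure lebesgue (f ` ball 0 (R + \<delta>)) - measure lebesgue (f ` ball 0 (R - \<delta>))" for c
  proof (rule sum_measure_image_disjoint_balls_le[OF cont inj \<open>cball 0 (R + \<delta>) \<subseteq> S\<close> \<open>\<delta> > 0\<close>])
    have sep: "2 * \<delta> \<le> dist (x m) (x m')" if "m \<in> G" "m' \<in> G" "cl m = cl m'" "m < m'" for m m'
    proof -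
      have same_class: "m mod 5 = m' mod 5" "m < n \<longleftrightarrow> m' < n"
        using that(3) by (auto simp: cl_def)
      have "4 * pi * R / N \<le> dist (x m) (x m')"
        unfolding x_def using \<open>R > 0\<close> \<open>G \<subseteq> {..<N}\<close> that
        by (intro circle_param_cells_separated[OF _ N(1) \<open>m < m'\<close> _ same_class p p]) auto
      then show ?thesis
        by (simp add: \<delta>)
    qed
    show "2 * \<delta> \<le> dist (x m) (x m')"
      if "m \<in> {m \<in> G. cl m = c}" "m' \<in> {m \<in> G. cl m = c}" "m \<noteq> m'" for m m'
      using sep[of m m'] sep[of m' m] that by (cases "m < m'") (auto simp: dist_commute)
    show "norm (x m) = R" for m
      using \<open>R > 0\<close> by (simp add: x_def)
  qed (use \<open>finite G\<close> in simp)
  have "(\<Sum>m\<in>G. measure lebesgue (f ` ball (x m) \<delta>))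
      = (\<Sum>c\<in>{..<5} \<times> UNIV. \<Sum>m\<in>{m \<in> G. cl m = c}. measure lebesgue (f ` ball (x m) \<delta>))"
    using \<open>finite G\<close> by (intro sum.group[symmetric]) (auto simp: cl_def)
  also have "\<dots> \<le> (\<Sum>c\<in>{..<5::nat} \<times> (UNIV :: bool set).
      measure lebesgue (f ` ball 0 (R + \<delta>)) - measure lebesgue (f ` ball 0 (R - \<delta>)))"
    by (intro sum_mono class_le)
  also have "\<dots> = 10 * (measure lebesgue (f ` ball 0 (R + \<delta>)) - measure lebesgue (f ` ball 0 (R - \<delta>)))"
    by (simp add: card_cartesian_product)
  finally show ?thesis
    by (simp add: x_def)
qed

lemma sum_min_stretch_cells_le:
  fixes N n :: nat and p :: "nat \<Rightarrow> real"
  assumes cont: "continuous_on S f" and inj: "inj_on f S" and "cball 0 (R + \<delta>) \<subseteq> S" "R > 0"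
    and N: "N = 2 * n" "n > 0" and \<delta>: "\<delta> = 2 * pi * R / N" and "G \<subseteq> {..<N}"
    and p: "\<And>m. m \<in> G \<Longrightarrow> p m \<in> {real m / N..real m / N + 1 / N}"
    and area: "measure lebesgue (f ` ball 0 (R + \<delta>)) - measure lebesgue (f ` ball 0 (R - \<delta>)) \<le> C * \<delta>"
  shows "(\<Sum>m\<in>G. min_stretch f (circle_param R (p m)) \<delta>) \<le> sqrt (20 * C * R)"
proof -
  define l where "l m = min_stretch f (circle_param R (p m)) \<delta>" for m
  have "\<delta> > 0"
    using N \<open>R > 0\<close> by (simp add: \<delta>)
  have "pi * (l m)\<^sup>2 \<le> measure lebesgue (f ` ball (circle_param R (p m)) \<delta>)" for m
    unfolding l_def
  proof (rule pi_min_stretch_sq_le_measure_image_ball[OF cont inj _ \<open>\<delta> > 0\<close>])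
    have "cball (circle_param R (p m)) \<delta> \<subseteq> cball 0 (R + \<delta>)"
      using \<open>R > 0\<close> by (simp add: cball_subset_cball_iff)
    then show "cball (circle_param R (p m)) \<delta> \<subseteq> S"
      using assms(3) by blast
  qed
  then have "pi * (\<Sum>m\<in>G. (l m)\<^sup>2) \<le> (\<Sum>m\<in>G. measure lebesgue (f ` ball (circle_param R (p m)) \<delta>))"
    unfolding sum_distrib_left by (intro sum_mono)
  also have "\<dots> \<le> 10 * (C * \<delta>)"
    using sum_measure_image_cell_balls_le[OF cont inj assms(3,4) N \<delta> assms(8) p] area by simp
  finally have sum_sq: "(\<Sum>m\<in>G. (l m)\<^sup>2) \<le> 10 * (C * \<delta>) / pi"
    by (simp add: field_simps)
  have "0 \<le> measure lebesgue (f ` ball 0 (R + \<delta>)) - measure lebesgue (f ` ball 0 (R - \<delta>))"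
    using sum_measure_image_disjoint_balls_le[OF cont inj assms(3) \<open>\<delta> > 0\<close>, of "{}"] by simp
  then have "0 \<le> C * \<delta>"
    using area by linarith
  have "(\<Sum>m\<in>G. l m)\<^sup>2 \<le> (\<Sum>m\<in>G. (l m)\<^sup>2) * card G"
    by (rule sum_squared_le_sum_of_squares)
  also have "\<dots> \<le> 10 * (C * \<delta>) / pi * N"
    using sum_sq \<open>G \<subseteq> {..<N}\<close> card_mono[of "{..<N}" G] \<open>0 \<le> C * \<delta>\<close>
    by (intro mult_mono) (auto intro: sum_nonneg)
  also have "\<dots> = 20 * C * R"
    using N by (simp add: \<delta>)
  finally show ?thesis
    unfolding l_def by (rule real_le_rsqrt)
qed

lemma norm_diff_circle_param_le_min_stretch:
  assumes cont: "continuous_on S f" and inj: "inj_on f S" and "cball 0 (R + \<delta>) \<subseteq> S" "R \<ge> 0"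
    and "bounded_distortion f H \<rho> (circle_param R p)" "0 < \<delta>" "\<delta> < \<rho>" "H > 0"
    and "2 * pi * R * \<bar>y - p\<bar> \<le> \<delta>" "2 * pi * R * \<bar>z - p\<bar> \<le> \<delta>"
  shows "norm (f (circle_param R y) - f (circle_param R z)) \<le> 2 * H * min_stretch f (circle_param R p) \<delta>"
proof -
  have near: "norm (f (circle_param R q) - f (circle_param R p)) \<le> H * min_stretch f (circle_param R p) \<delta>"
    if "2 * pi * R * \<bar>q - p\<bar> \<le> \<delta>" for q
  proof (rule norm_le_min_stretch_if_bounded_distortion[OF cont inj _ assms(5-8)])
    have "cball (circle_param R p) \<delta> \<subseteq> cball 0 (R + \<delta>)"
      using \<open>R \<ge> 0\<close> by (simp add: cball_subset_cball_iff)
    then show "cball (circle_param R p) \<delta> \<subseteq> S"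
      using assms(3) by blast
    show "circle_param R q \<in> cball (circle_param R p) \<delta>"
      using norm_circle_param_diff_le[OF \<open>R \<ge> 0\<close>, of q p] that
      by (simp add: dist_norm norm_minus_commute)
  qed
  have "norm (f (circle_param R y) - f (circle_param R z))
      \<le> norm (f (circle_param R y) - f (circle_param R p)) + norm (f (circle_param R z) - f (circle_param R p))"
    using norm_triangle_ineq4[of "f (circle_param R y) - f (circle_param R p)"
        "f (circle_param R z) - f (circle_param R p)"] by simp
  also have "\<dots> \<le> 2 * H * min_stretch f (circle_param R p) \<delta>"
    using near[OF assms(9)] near[OF assms(10)] by simp
  finally show ?thesis .
qed

lemma oscillation_cover_cells:
  fixes N n :: nat
  assumes cont: "continuous_on S f" and inj: "inj_on f S" and cball_S: "cball 0 (R + \<delta>) \<subseteq> S"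
    and "R > 0" "H > 0" and N: "N = 2 * n" "n > 0" and \<delta>: "\<delta> = 2 * pi * R / N" "\<delta> < \<rho>"
    and "1 / N \<le> \<beta>"
    and area: "measure lebesgue (f ` ball 0 (R + \<delta>)) - measure lebesgue (f ` ball 0 (R - \<delta>)) \<le> C * \<delta>"
  shows "oscillation_cover (\<lambda>s. f (circle_param R s))
    ({s. bounded_distortion f H \<rho> (circle_param R s)} \<inter> {0..1}) \<beta> (2 * H * sqrt (20 * C * R))"
proof -
  have "\<delta> > 0"
    using N \<open>R > 0\<close> by (simp add: \<delta>)
  define E where "E = {s. bounded_distortion f H \<rho> (circle_param R s)} \<inter> {0..1}"
  define J where "J m = {real m / N..real m / N + 1 / N}" for m
  define G where "G = {m. m < N \<and> J m \<inter> E \<noteq> {}}"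
  have "\<forall>m\<in>G. \<exists>s. s \<in> J m \<inter> E"
    by (auto simp: G_def)
  then obtain p where p: "\<And>m. m \<in> G \<Longrightarrow> p m \<in> J m \<inter> E"
    by metis
  define w where "w m = (if m \<in> G then 2 * H * min_stretch f (circle_param R (p m)) \<delta> else 0)" for m
  show ?thesis
    unfolding oscillation_cover_def E_def[symmetric]
  proof (intro exI conjI)
    show "1 / N \<le> \<beta>"
      by fact
    show "\<forall>m<N. 0 \<le> w m"
      using \<open>H > 0\<close> \<open>\<delta> > 0\<close> by (simp add: w_def min_stretch_nonneg)
    have "(\<Sum>m<N. w m) = 2 * H * (\<Sum>m\<in>G. min_stretch f (circle_param R (p m)) \<delta>)"
      by (simp add: w_def G_def sum.inter_filter[symmetric] sum_distrib_left)
    also have "\<dots> \<le> 2 * H * sqrt (20 * C * R)"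
      using p \<open>H > 0\<close>
      by (intro mult_left_mono sum_min_stretch_cells_le[OF cont inj cball_S \<open>R > 0\<close> N \<delta>(1) _ _ area])
        (auto simp: G_def J_def)
    finally show "(\<Sum>m<N. w m) \<le> 2 * H * sqrt (20 * C * R)" .
    show "E \<subseteq> (\<Union>m<N. {real m / N..real m / N + 1 / N})"
      using ex_cell_mem[of N] \<open>n > 0\<close> by (force simp: E_def N)
    show "\<forall>m<N. \<forall>y\<in>{real m / N..real m / N + 1 / N} \<inter> E. \<forall>z\<in>{real m / N..real m / N + 1 / N} \<inter> E.
        norm (f (circle_param R y) - f (circle_param R z)) \<le> w m"
    proof (intro allI impI ballI)
      fix m y z assume "m < N" "y \<in> {real m / N..real m / N + 1 / N} \<inter> E"
        "z \<in> {real m / N..real m / N + 1 / N} \<inter> E"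
      then have "m \<in> G" "y \<in> J m \<inter> E" "z \<in> J m \<inter> E"
        by (auto simp: G_def J_def)
      have "2 * pi * R * \<bar>q - p m\<bar> \<le> \<delta>" if "q \<in> J m" for q
      proof -
        have "\<bar>q - p m\<bar> \<le> 1 / N"
          using that p[OF \<open>m \<in> G\<close>] by (auto simp: J_def abs_le_iff)
        then show ?thesis
          using \<open>R > 0\<close> by (simp add: \<delta> mult_left_mono divide_inverse)
      qed
      then show "norm (f (circle_param R y) - f (circle_param R z)) \<le> w m"
        using p[OF \<open>m \<in> G\<close>] \<open>y \<in> J m \<inter> E\<close> \<open>z \<in> J m \<inter> E\<close> \<open>m \<in> G\<close> \<open>R > 0\<close>
        by (simp add: w_def E_def norm_diff_circle_param_le_min_stretch[OF cont inj cball_S _ _ \<open>\<delta> > 0\<close> \<delta>(2) \<open>H > 0\<close>])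
    qed
  qed
qed

lemma oscillation_cover_bounded_distortion_set:
  assumes cont: "continuous_on S f" and inj: "inj_on f S" and "cball 0 (R + \<rho>) \<subseteq> S"
    and "R > 0" "H > 0" "\<rho> > 0" "\<beta> > 0"
    and area: "\<forall>\<^sub>F \<delta> in at_right 0.
      measure lebesgue (f ` ball 0 (R + \<delta>)) - measure lebesgue (f ` ball 0 (R - \<delta>)) \<le> C * \<delta>"
  shows "oscillation_cover (\<lambda>s. f (circle_param R s))
    ({s. bounded_distortion f H \<rho> (circle_param R s)} \<inter> {0..1}) \<beta> (2 * H * sqrt (20 * C * R))"
proof -
  obtain \<delta>0 where "\<delta>0 > 0" and \<delta>0: "\<And>\<delta>. 0 < \<delta> \<Longrightarrow> \<delta> < \<delta>0 \<Longrightarrow>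
      measure lebesgue (f ` ball 0 (R + \<delta>)) - measure lebesgue (f ` ball 0 (R - \<delta>)) \<le> C * \<delta>"
    using area by (auto simp: eventually_at_right_field)
  obtain n :: nat where n: "pi * R / min \<rho> \<delta>0 < n" "1 / \<beta> < n"
    using reals_Archimedean2[of "max (pi * R / min \<rho> \<delta>0) (1 / \<beta>)"] by auto
  define N where "N = 2 * n"
  define \<delta> where "\<delta> = 2 * pi * R / N"
  have "0 < 1 / \<beta>"
    using \<open>\<beta> > 0\<close> by simp
  then have "n > 0"
    using n(2) by linarith
  have "pi * R < n * min \<rho> \<delta>0"
    using n(1) \<open>\<rho> > 0\<close> \<open>\<delta>0 > 0\<close> by (simp add: pos_divide_less_eq mult.commute)
  then have "pi * R / n < min \<rho> \<delta>0"
    using \<open>n > 0\<close> by (metis mult.commute of_nat_0_less_iff pos_divide_less_eq)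
  moreover have "\<delta> = pi * R / n"
    by (simp add: \<delta>_def N_def)
  ultimately have "\<delta> > 0" "\<delta> < \<rho>" "\<delta> < \<delta>0"
    using \<open>n > 0\<close> \<open>R > 0\<close> by simp_all
  have "1 / \<beta> \<le> real N"
    using n(2) by (simp add: N_def)
  then have "1 / N \<le> \<beta>"
    using \<open>\<beta> > 0\<close> \<open>n > 0\<close> by (simp add: N_def field_simps)
  have "cball 0 (R + \<delta>) \<subseteq> cball 0 (R + \<rho>)"
    using \<open>\<delta> < \<rho>\<close> by (intro subset_cball) simp
  then have "cball 0 (R + \<delta>) \<subseteq> S"
    using assms(3) by blast
  then show ?thesis
    using \<delta>0[OF \<open>\<delta> > 0\<close> \<open>\<delta> < \<delta>0\<close>] N_def \<delta>_def \<open>n > 0\<close> \<open>\<delta> < \<rho>\<close> \<open>1 / N \<le> \<beta>\<close> \<open>R > 0\<close> \<open>H > 0\<close>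
    by (intro oscillation_cover_cells[OF cont inj]) auto
qed

section \<open>Growth of the area of the image of a disc\<close>

lemma ln_ratio_le:
  fixes R \<delta> :: real
  assumes "0 < \<delta>" "\<delta> \<le> R / 2"
  shows "ln (R + \<delta>) - ln (R - \<delta>) \<le> 4 * \<delta> / R"
proof -
  have "ln (R + \<delta>) - ln (R - \<delta>) = ln ((R + \<delta>) / (R - \<delta>))"
    using assms by (simp add: ln_divide_pos)
  also have "\<dots> \<le> (R + \<delta>) / (R - \<delta>) - 1"
    using assms by (intro ln_le_minus_one) simp
  also have "\<dots> = 2 * \<delta> / (R - \<delta>)"
    using assms by (simp add: field_simps)
  also have "\<dots> \<le> 4 * \<delta> / R"
    using assms by (simp add: field_simps)
  finally show ?thesis .
qed

lemma diff_le_of_ln_diff_le: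
  fixes a b y :: real
  assumes "0 < a" "0 < b" "ln b - ln a \<le> y" "0 \<le> y" "y \<le> 1"
  shows "b - a \<le> 2 * y * a"
proof -
  have "b \<le> a * exp y"
    using assms by (metis diff_le_eq exp_add exp_ln exp_le_cancel_iff mult.commute)
  also have "exp y \<le> 1 + 2 * y"
    using exp_bound[OF assms(4,5)] assms(4,5) mult_right_le_one_le[of y y] by (simp add: power2_eq_square)
  then have "a * exp y \<le> a * (1 + 2 * y)"
    using assms(1) by simp
  finally show ?thesis
    by (simp add: algebra_simps)
qed

lemma increment_le_of_ln_increment_le:
  fixes a b c L R \<delta> :: real
  assumes "0 < a" "a \<le> c" "0 < b" "ln b - ln a \<le> L * (ln (R + \<delta>) - ln (R - \<delta>))"
    and "0 \<le> L" "0 < \<delta>" "\<delta> \<le> R / 2" "4 * L / R * \<delta> \<le> 1"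
  shows "b - a \<le> 8 * L * c / R * \<delta>"
proof -
  define y where "y = L * (ln (R + \<delta>) - ln (R - \<delta>))"
  have "ln (R - \<delta>) \<le> ln (R + \<delta>)"
    using assms(6,7) by simp
  then have "0 \<le> y"
    using \<open>0 \<le> L\<close> by (simp add: y_def)
  have "y \<le> L * (4 * \<delta> / R)"
    unfolding y_def using assms(5-7) by (intro mult_left_mono ln_ratio_le) auto
  then have "y \<le> 4 * L / R * \<delta>"
    by (simp add: mult_ac)
  moreover have "y \<le> 1"
    using \<open>y \<le> 4 * L / R * \<delta>\<close> assms(8) by linarith
  ultimately have "b - a \<le> 2 * y * a"
    using assms(4) \<open>0 \<le> y\<close> by (intro diff_le_of_ln_diff_le[OF assms(1,3)]) (simp_all add: y_def)
  also have "\<dots> \<le> 2 * (4 * L / R * \<delta>) * c"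
    using \<open>0 \<le> y\<close> \<open>y \<le> 4 * L / R * \<delta>\<close> assms(1,2) by (intro mult_mono) auto
  finally show ?thesis
    by (simp add: field_simps)
qed

lemma increment_le_if_lipschitz_ln_exp:
  fixes A :: "real \<Rightarrow> real"
  assumes pos: "\<And>r. 0 < r \<Longrightarrow> r < Rm \<Longrightarrow> 0 < A r"
    and mono: "\<And>r r'. 0 < r \<Longrightarrow> r \<le> r' \<Longrightarrow> r' < Rm \<Longrightarrow> A r \<le> A r'"
    and lip: "\<And>s t. s \<in> U \<Longrightarrow> t \<in> U \<Longrightarrow> \<bar>ln (A (exp s)) - ln (A (exp t))\<bar> \<le> L * \<bar>s - t\<bar>"
    and "L \<ge> 0" "open U" "ln R \<in> U" "0 < R" "R < Rm"
  shows "\<forall>\<^sub>F \<delta> in at_right 0. A (R + \<delta>) - A (R - \<delta>) \<le> 8 * L * A R / R * \<delta>"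
proof -
  have lnU: "\<forall>\<^sub>F \<delta> in at_right 0. ln (R + c * \<delta>) \<in> U" for c
  proof -
    have "tendsto (\<lambda>\<delta>. ln (R + c * \<delta>)) (ln (R + c * 0)) (at_right 0)"
      using \<open>0 < R\<close> by (intro tendsto_intros) auto
    then show ?thesis
      using \<open>open U\<close> \<open>ln R \<in> U\<close> by (auto dest: topological_tendstoD)
  qed
  have small: "\<forall>\<^sub>F \<delta> in at_right 0. c * \<delta> < d" if "d > 0" for c d :: real
  proof -
    have "tendsto (\<lambda>\<delta>. c * \<delta>) (c * 0) (at_right 0)"
      by (intro tendsto_intros)
    then show ?thesis
      using that by (auto dest: order_tendstoD)
  qed
  have "\<forall>\<^sub>F \<delta> in at_right 0. 1 * \<delta> < R / 2"
    by (rule small) (use \<open>0 < R\<close> in simp)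
  moreover have "\<forall>\<^sub>F \<delta> in at_right 0. 1 * \<delta> < Rm - R"
    by (rule small) (use \<open>R < Rm\<close> in simp)
  moreover have "\<forall>\<^sub>F \<delta> in at_right 0. 4 * L / R * \<delta> < 1"
    by (rule small) simp
  moreover note eventually_at_right_less lnU[of 1] lnU[of "-1"]
  ultimately have "\<forall>\<^sub>F \<delta> in at_right 0. 0 < \<delta> \<and> \<delta> < R / 2 \<and> R + \<delta> < Rm \<and> 4 * L / R * \<delta> < 1 \<and>
      ln (R + \<delta>) \<in> U \<and> ln (R - \<delta>) \<in> U"
    by eventually_elim auto
  then show ?thesis
  proof (rule eventually_mono)
    fix \<delta> assume \<delta>: "0 < \<delta> \<and> \<delta> < R / 2 \<and> R + \<delta> < Rm \<and> 4 * L / R * \<delta> < 1 \<and>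
      ln (R + \<delta>) \<in> U \<and> ln (R - \<delta>) \<in> U"
    have "ln (R - \<delta>) \<le> ln (R + \<delta>)"
      using \<delta> by simp
    then have "ln (A (R + \<delta>)) - ln (A (R - \<delta>)) \<le> L * (ln (R + \<delta>) - ln (R - \<delta>))"
      using lip[of "ln (R + \<delta>)" "ln (R - \<delta>)"] \<delta> \<open>0 < R\<close> by simp
    then show "A (R + \<delta>) - A (R - \<delta>) \<le> 8 * L * A R / R * \<delta>"
      using \<delta> \<open>R < Rm\<close> \<open>L \<ge> 0\<close> by (intro increment_le_of_ln_increment_le pos mono) auto
  qed
qed

lemma log_mean_radius_eq:
  assumes "0 < measure lebesgue (f ` ball 0 (exp t))"
  shows "log_mean_radius f t = (ln (measure lebesgue (f ` ball 0 (exp t))) - ln pi) / 2"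
  using assms by (simp add: log_mean_radius_def mean_radius_def ln_sqrt ln_div)

lemma area_increment_le_if_bi_lipschitz_at:
  fixes f :: "complex \<Rightarrow> complex"
  assumes cont: "continuous_on (ball 0 (exp M)) f" and inj: "inj_on f (ball 0 (exp M))"
    and "bi_lipschitz_at M t0 (log_mean_radius f)" "t0 < M"
  obtains C where "\<forall>\<^sub>F \<delta> in at_right 0.
    measure lebesgue (f ` ball 0 (exp t0 + \<delta>)) - measure lebesgue (f ` ball 0 (exp t0 - \<delta>)) \<le> C * \<delta>"
proof -
  obtain U L where "open U" "t0 \<in> U" "U \<subseteq> {..<M}" "L > 0"
    and lip: "\<And>s t. s \<in> U \<Longrightarrow> t \<in> U \<Longrightarrow> \<bar>log_mean_radius f s - log_mean_radius f t\<bar> \<le> L * \<bar>s - t\<bar>"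
    using assms(3) unfolding bi_lipschitz_at_def bi_lipschitz_on_def by blast
  define A where "A r = measure lebesgue (f ` ball 0 r)" for r
  have pos: "0 < A r" if "0 < r" "r < exp M" for r
    unfolding A_def using that by (intro measure_image_ball_pos[OF cont inj]) auto
  have lmeas: "f ` ball 0 r \<in> lmeasurable" if "r < exp M" for r
    using that by (intro lmeasurable_image_ball[OF cont inj]) (simp add: cball_subset_ball_iff)
  have mono: "A r \<le> A r'" if "0 < r" "r \<le> r'" "r' < exp M" for r r'
    unfolding A_def using that
    by (intro measure_mono_fmeasurable[OF image_mono[OF subset_ball] fmeasurableD[OF lmeas] lmeas]) auto
  have "\<bar>ln (A (exp s)) - ln (A (exp t))\<bar> \<le> 2 * L * \<bar>s - t\<bar>" if "s \<in> U" "t \<in> U" for s t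
  proof -
    have "exp s < exp M" "exp t < exp M"
      using that \<open>U \<subseteq> {..<M}\<close> by auto
    then have "ln (A (exp s)) - ln (A (exp t)) = 2 * (log_mean_radius f s - log_mean_radius f t)"
      using pos by (simp add: log_mean_radius_eq A_def field_simps)
    then show ?thesis
      using lip[OF that] by (simp add: abs_mult)
  qed
  then have "\<forall>\<^sub>F \<delta> in at_right 0. A (exp t0 + \<delta>) - A (exp t0 - \<delta>) \<le> 8 * (2 * L) * A (exp t0) / exp t0 * \<delta>"
    using \<open>L > 0\<close> \<open>open U\<close> \<open>t0 \<in> U\<close> \<open>t0 < M\<close>
    by (intro increment_le_if_lipschitz_ln_exp[OF pos mono]) auto
  then show ?thesis
    using that unfolding A_def by blast
qed

section \<open>Rectifiability of the image of the circle\<close>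

text \<open>No sphere occurs on the right, so the equation can be used for unfolding without looping.\<close>

lemma Ball_sphere_iff_norm_eq:
  fixes x :: "'a::real_normed_vector"
  shows "(\<forall>y\<in>sphere x r. P y) \<longleftrightarrow> (\<forall>u. norm u = r \<longrightarrow> P (x + u))"
proof
  assume "\<forall>y\<in>sphere x r. P y"
  then show "\<forall>u. norm u = r \<longrightarrow> P (x + u)"
    by (simp add: dist_norm)
next
  assume all_u: "\<forall>u. norm u = r \<longrightarrow> P (x + u)"
  show "\<forall>y\<in>sphere x r. P y"
  proof
    fix y assume "y \<in> sphere x r"
    then have "norm (y - x) = r"
      by (simp add: dist_norm norm_minus_commute)
    then show "P y"
      using all_u by (metis add.commute diff_add_cancel)
  qed
qed

lemma closed_bounded_distortion_set:
  assumes "continuous_on (ball 0 (R + \<rho>)) f" "R \<ge> 0"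
  shows "closed {s. bounded_distortion f H \<rho> (circle_param R s)}"
proof -
  have cont: "continuous_on UNIV (\<lambda>s. f (circle_param R s + u))" if "norm u < \<rho>" for u
    using that \<open>R \<ge> 0\<close> norm_triangle_lt[of "circle_param R _" u]
    by (intro continuous_on_compose2[OF assms(1)] continuous_intros) auto
  have "{s. bounded_distortion f H \<rho> (circle_param R s)} = (\<Inter>r\<in>{0<..<\<rho>}. \<Inter>u\<in>{u. norm u = r}. \<Inter>v\<in>{v. norm v = r}.
      {s. norm (f (circle_param R s + u) - f (circle_param R s))
          \<le> H * norm (f (circle_param R s + v) - f (circle_param R s))})"
    unfolding bounded_distortion_def Ball_sphere_iff_norm_eq by blast
  also have "closed \<dots>"
    using cont[of 0] cont by (intro closed_INT ballI closed_Collect_le continuous_intros) auto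
  finally show ?thesis .
qed

lemma incseq_bounded_distortion_sets:
  assumes "decseq \<rho>"
  shows "incseq (\<lambda>k. {s. bounded_distortion f H (\<rho> k) (g s)})"
  unfolding incseq_def
proof (intro allI impI subsetI)
  fix k k' s assume "k \<le> k'" "s \<in> {s. bounded_distortion f H (\<rho> k) (g s)}"
  moreover from this have "\<rho> k' \<le> \<rho> k"
    using assms by (simp add: decseq_def)
  ultimately show "s \<in> {s. bounded_distortion f H (\<rho> k') (g s)}"
    using bounded_distortion_mono by simp
qed

lemma bounded_distortion_sets_cover:
  assumes "\<rho> \<longlonglongrightarrow> 0" "\<And>s. s \<in> A \<Longrightarrow> \<exists>r>0. bounded_distortion f H r (g s)"
  shows "A \<subseteq> (\<Union>k. {s. bounded_distortion f H (\<rho> k) (g s)})"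
proof
  fix s assume "s \<in> A"
  then obtain r where "r > 0" "bounded_distortion f H r (g s)"
    using assms(2) by blast
  moreover obtain k where "\<rho> k < r"
    using order_tendstoD(2)[OF assms(1) \<open>r > 0\<close>] by (auto simp: eventually_sequentially)
  ultimately have "bounded_distortion f H (\<rho> k) (g s)"
    using bounded_distortion_mono by simp
  then show "s \<in> (\<Union>k. {s. bounded_distortion f H (\<rho> k) (g s)})"
    by blast
qed

lemma rectifiable_curve_image_circle:
  fixes f :: "complex \<Rightarrow> complex"
  assumes cont: "continuous_on (ball 0 Rm) f" and inj: "inj_on f (ball 0 Rm)"
    and "0 < R" "R < Rm" "H > 0"
    and distortion: "\<And>s. \<exists>\<rho>>0. bounded_distortion f H \<rho> (circle_param R s)"
    and area: "\<forall>\<^sub>F \<delta> in at_right 0.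
      measure lebesgue (f ` ball 0 (R + \<delta>)) - measure lebesgue (f ` ball 0 (R - \<delta>)) \<le> C * \<delta>"
  shows "rectifiable_curve (\<lambda>s. f (circle_param R s))"
proof -
  define \<rho> where "\<rho> k = (Rm - R) / real (k + 2)" for k
  have \<rho>_pos: "\<rho> k > 0" for k
    using \<open>R < Rm\<close> by (simp add: \<rho>_def)
  have \<rho>_ball: "cball 0 (R + \<rho> k) \<subseteq> ball (0::complex) Rm" for k
  proof -
    have "\<rho> k \<le> (Rm - R) / 2"
      unfolding \<rho>_def using \<open>R < Rm\<close> by (intro divide_left_mono) auto
    then show ?thesis
      using \<open>R < Rm\<close> by (simp add: cball_subset_ball_iff)
  qed
  show ?thesis
  proof (rule rectifiable_curve_if_oscillation_covers)
    show "continuous_on {0..1} (\<lambda>s. f (circle_param R s))"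
      using \<open>0 < R\<close> \<open>R < Rm\<close>
      by (intro continuous_on_compose2[OF cont] continuous_intros) auto
    show "closed {s. bounded_distortion f H (\<rho> k) (circle_param R s)}" for k
      using \<open>0 < R\<close> \<rho>_ball[of k] ball_subset_cball
      by (intro closed_bounded_distortion_set continuous_on_subset[OF cont]) auto
    show "incseq (\<lambda>k. {s. bounded_distortion f H (\<rho> k) (circle_param R s)})"
      unfolding \<rho>_def using \<open>R < Rm\<close>
      by (intro incseq_bounded_distortion_sets decseq_SucI divide_left_mono) auto
    have "\<rho> \<longlonglongrightarrow> 0"
      unfolding \<rho>_def by (rule LIMSEQ_ignore_initial_segment[OF lim_const_over_n])
    then show "{0..1} \<subseteq> (\<Union>k. {s. bounded_distortion f H (\<rho> k) (circle_param R s)})"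
      using distortion by (rule bounded_distortion_sets_cover)
    show "oscillation_cover (\<lambda>s. f (circle_param R s))
        ({s. bounded_distortion f H (\<rho> k) (circle_param R s)} \<inter> {0..1}) \<beta> (2 * H * sqrt (20 * C * R))"
      if "\<beta> > 0" for k \<beta>
      using cont inj \<rho>_ball \<open>0 < R\<close> \<open>H > 0\<close> \<rho>_pos that area
      by (rule oscillation_cover_bounded_distortion_set)
  qed
qed

theorem proposition1p4:
  fixes M t0 :: real and f :: "complex \<Rightarrow> complex"
  assumes "quasiconformal_on (ball 0 (exp M)) f"
    and "f 0 = 0"
    and "t0 < M"
    and "\<not> rectifiable_curve (\<lambda>s. f (of_real (exp t0) * cis (2 * pi * s)))"
  shows "\<not> bi_lipschitz_at M t0 (log_mean_radius f)"
proof
  assume "bi_lipschitz_at M t0 (log_mean_radius f)"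
  have cont: "continuous_on (ball 0 (exp M)) f" and inj: "inj_on f (ball 0 (exp M))"
    using assms(1) by (auto simp: quasiconformal_on_def)
  obtain C where area: "\<forall>\<^sub>F \<delta> in at_right 0.
      measure lebesgue (f ` ball 0 (exp t0 + \<delta>)) - measure lebesgue (f ` ball 0 (exp t0 - \<delta>)) \<le> C * \<delta>"
    using area_increment_le_if_bi_lipschitz_at[OF cont inj \<open>bi_lipschitz_at M t0 (log_mean_radius f)\<close> assms(3)] .
  obtain H where "H > 0" "\<And>x. x \<in> ball 0 (exp M) \<Longrightarrow> \<exists>\<rho>>0. bounded_distortion f H \<rho> x"
    using quasiconformal_on_imp_bounded_distortion[OF assms(1)] by blast
  then have "rectifiable_curve (\<lambda>s. f (circle_param (exp t0) s))"
    using \<open>t0 < M\<close> by (intro rectifiable_curve_image_circle[OF cont inj _ _ \<open>H > 0\<close> _ area]) auto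
  then show False
    using assms(4) by (simp add: circle_param_def)
qed

end
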